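(* Let $\alpha\in(0,\tfrac12)$ and $0<X_B\le X_A$. If player $B$ pre-commits any $p\in[0,X_B]$ to battlefield $b=2$, then $$u_B(p)<\min\{\pi_B(\sigma):\sigma\in(0,\infty),\ S(\sigma)=0\}.$$
   Context: Two-battlefield asymmetric setting $\mathrm{GGL}(X_A,X_B,\alpha)$: valuations $v_{A,1}=\alpha$, $v_{A,2}=1-\alpha$, $v_{B,1}=1-\alpha$, $v_{B,2}=\alpha$, budgets $X_A,X_B>0$. Define, for $x,y\ge0$, $L(x,y)=\frac{x}{2y}$ if $0\le x\le y$, $y>0$; $L(x,y)=1-\frac{y}{2x}$ if $x>y\ge0$; $L(0,0)=\tfrac12$. Let $c=\frac{(1-\alpha)^2}{\alpha}+\frac{\alpha^2}{1-\alpha}$, $r=X_A/X_B$, and $S:(0,\infty)\to\mathbb R$: $S(\sigma)=\sigma^2(c\sigma-r)$ on $(0,\frac{\alpha}{1-\alpha})$; $S(\sigma)=\frac{\alpha^2}{1-\alpha}(\sigma^3-r)+\alpha\sigma(1-r\sigma)$ on $[\frac{\alpha}{1-\alpha},\frac{1-\alpha}{\alpha})$; $S(\sigma)=\sigma-rc$ on $[\frac{1-\alpha}{\alpha},\infty)$. The equilibrium payoff of $B$ associated with a zero $\sigma$ of $S$ is $\pi_B(\sigma)=1-\frac{\sigma}{2}$ if $\sigma\in(0,\frac{\alpha}{1-\alpha})$; $\pi_B(\sigma)=1-\alpha-\frac{\alpha\sigma}{2}+\frac{\alpha^2}{2\sigma(1-\alpha)}$ if $\sigma\in[\frac{\alpha}{1-\alpha},\frac{1-\alpha}{\alpha})$;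 $\pi_B(\sigma)=\frac{c}{2\sigma}$ if $\sigma\ge\frac{1-\alpha}{\alpha}$. Pre-commitment: $B$ places $p\in[0,X_B]$ on one battlefield $b\in\{1,2\}$. Then $u_A^{M}(p)=v_{A,b}+(1-v_{A,b})L(X_A-p,X_B-p)$ (for $p\le X_A$) and $u_A^{W}(p)=(1-v_{A,b})L(X_A,X_B-p)$. Player $A$'s response is $\mathtt A_b(p)=\mathtt M$ if $p\le X_A$ and $u_A^M(p)>u_A^W(p)$, and $\mathtt A_b(p)=\mathtt W$ otherwise. Player $B$'s payoff is $u_B(p)=(1-v_{B,b})L(X_B-p,X_A-p)$ if $\mathtt A_b(p)=\mathtt M$, and $u_B(p)=v_{B,b}+(1-v_{B,b})L(X_B-p,X_A)$ if $\mathtt A_b(p)=\mathtt W$. *)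

theory Defs
  imports Complex_Main
begin

text \<open>Tie-breaking contest function L(x,y), meant for x, y \<ge> 0.\<close>
definition L :: "real \<Rightarrow> real \<Rightarrow> real" where
  "L x y = (if x = 0 \<and> y = 0 then 1/2
            else if x \<le> y then x / (2 * y)
            else 1 - y / (2 * x))"

text \<open>Valuations in GGL(X_A, X_B, alpha); battlefields are 1 and 2.\<close>
definition vA :: "real \<Rightarrow> nat \<Rightarrow> real" where
  "vA \<alpha> b = (if b = 1 then \<alpha> else 1 - \<alpha>)"

definition vB :: "real \<Rightarrow> nat \<Rightarrow> real" where
  "vB \<alpha> b = (if b = 1 then 1 - \<alpha> else \<alpha>)"

definition cc :: "real \<Rightarrow> real" where
  "cc \<alpha> = (1 - \<alpha>)^2 / \<alpha> + \<alpha>^2 / (1 - \<alpha>)"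

definition S :: "real \<Rightarrow> real \<Rightarrow> real \<Rightarrow> real \<Rightarrow> real" where
  "S \<alpha> XA XB \<sigma> =
     (let r = XA / XB in
      if \<sigma> < \<alpha> / (1 - \<alpha>) then \<sigma>^2 * (cc \<alpha> * \<sigma> - r)
      else if \<sigma> < (1 - \<alpha>) / \<alpha> then
        \<alpha>^2 / (1 - \<alpha>) * (\<sigma>^3 - r) + \<alpha> * \<sigma> * (1 - r * \<sigma>)
      else \<sigma> - r * cc \<alpha>)"

definition piB :: "real \<Rightarrow> real \<Rightarrow> real" where
  "piB \<alpha> \<sigma> =
     (if \<sigma> < \<alpha> / (1 - \<alpha>) then 1 - \<sigma> / 2
      else if \<sigma> < (1 - \<alpha>) / \<alpha> then
        1 - \<alpha> - \<alpha> * \<sigma> / 2 + \<alpha>^2 / (2 * \<sigma> * (1 - \<alpha>))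
      else cc \<alpha> / (2 * \<sigma>))"

definition uAM :: "real \<Rightarrow> real \<Rightarrow> real \<Rightarrow> nat \<Rightarrow> real \<Rightarrow> real" where
  "uAM \<alpha> XA XB b p = vA \<alpha> b + (1 - vA \<alpha> b) * L (XA - p) (XB - p)"

definition uAW :: "real \<Rightarrow> real \<Rightarrow> real \<Rightarrow> nat \<Rightarrow> real \<Rightarrow> real" where
  "uAW \<alpha> XA XB b p = (1 - vA \<alpha> b) * L XA (XB - p)"

text \<open>A's response: True means M (match), False means W (withdraw).\<close>
definition respM :: "real \<Rightarrow> real \<Rightarrow> real \<Rightarrow> nat \<Rightarrow> real \<Rightarrow> bool" where
  "respM \<alpha> XA XB b p \<longleftrightarrow> p \<le> XA \<and> uAM \<alpha> XA XB b p > uAW \<alpha> XA XB b p"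

definition uB :: "real \<Rightarrow> real \<Rightarrow> real \<Rightarrow> nat \<Rightarrow> real \<Rightarrow> real" where
  "uB \<alpha> XA XB b p =
     (if respM \<alpha> XA XB b p then (1 - vB \<alpha> b) * L (XB - p) (XA - p)
      else vB \<alpha> b + (1 - vB \<alpha> b) * L (XB - p) XA)"

end

theory Submission
  imports Defs "HOL-Computational_Algebra.Polynomial"
begin

text \<open>Write \<open>r = X\<^sub>A/X\<^sub>B \<ge> 1\<close>. On battlefield 2 player A's own value \<open>1 - \<alpha>\<close> exceeds \<open>1/2\<close>,
  so A always matches, and B then gets at most \<open>(1 - \<alpha>) / (2r) < 1/(2r)\<close>. On the other
  hand every zero of \<open>S\<close> yields \<open>\<pi>\<^sub>B \<ge> 1/(2r)\<close>: there is no zero below \<open>\<alpha>/(1-\<alpha>)\<close>, above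
  \<open>(1-\<alpha>)/\<alpha>\<close> the zero is \<open>\<sigma> = r c\<close> with \<open>\<pi>\<^sub>B = 1/(2r)\<close> exactly, and in the middle regime the
  difference factors into manifestly nonnegative terms. Zeros exist by the intermediate
  value theorem and are finitely many (roots of a cubic), so the minimum is attained.\<close>

lemma L_nonneg: "0 \<le> x \<Longrightarrow> 0 \<le> y \<Longrightarrow> 0 \<le> L x y"
  unfolding L_def by (auto simp: field_simps)

lemma L_le_one: "0 \<le> x \<Longrightarrow> 0 \<le> y \<Longrightarrow> L x y \<le> 1"
  unfolding L_def by (auto simp: field_simps)

lemma L_diff_le:
  assumes "0 \<le> p" "p \<le> x" "x \<le> y" "0 < y"
  shows "L (x - p) (y - p) \<le> x / (2 * y)"
proof (cases "y = p")
  case True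
  then show ?thesis using assms by (simp add: L_def)
next
  case False
  then have "L (x - p) (y - p) = (x - p) / (2 * (y - p))"
    using assms unfolding L_def by auto
  also have "\<dots> \<le> x / (2 * y)"
    using False assms mult_left_mono[of x y p] by (simp add: field_simps)
  finally show ?thesis .
qed

lemma respM_battlefield2:
  assumes "0 \<le> \<alpha>" "\<alpha> < 1/2" "0 \<le> p" "p \<le> XB" "XB \<le> XA"
  shows "respM \<alpha> XA XB 2 p"
proof -
  have "uAW \<alpha> XA XB 2 p \<le> \<alpha>"
    using assms L_le_one[of XA "XB - p"] unfolding uAW_def vA_def
    by (simp add: mult_left_le)
  moreover have "1 - \<alpha> \<le> uAM \<alpha> XA XB 2 p"
    using assms L_nonneg[of "XA - p" "XB - p"] unfolding uAM_def vA_def by simp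
  ultimately show ?thesis
    using assms unfolding respM_def by auto
qed

lemma uB_battlefield2_less:
  assumes "0 < \<alpha>" "\<alpha> < 1/2" "0 < XB" "XB \<le> XA" "0 \<le> p" "p \<le> XB"
  shows "uB \<alpha> XA XB 2 p < XB / (2 * XA)"
proof -
  have "uB \<alpha> XA XB 2 p = (1 - \<alpha>) * L (XB - p) (XA - p)"
    using respM_battlefield2 assms unfolding uB_def vB_def by simp
  also have "\<dots> \<le> (1 - \<alpha>) * (XB / (2 * XA))"
    using assms L_diff_le[of p XB XA] by (intro mult_left_mono) auto
  also have "\<dots> < XB / (2 * XA)"
    using assms by (simp add: field_simps)
  finally show ?thesis .
qed

lemma cc_pos: "0 < \<alpha> \<Longrightarrow> \<alpha> < 1 \<Longrightarrow> 0 < cc \<alpha>"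
  unfolding cc_def by (intro add_pos_pos divide_pos_pos) auto

lemma cc_mult_threshold_less_one:
  assumes "0 < \<alpha>" "\<alpha> < 1/2"
  shows "cc \<alpha> * (\<alpha> / (1 - \<alpha>)) < 1"
proof -
  have "(u^2 / \<alpha> + \<alpha>^2 / u) * (\<alpha> / u) = u + \<alpha>^3 / u^2" if "0 < u" for u
    using that assms by (simp add: field_simps power2_eq_square power3_eq_cube)
  from this[of "1 - \<alpha>"] assms
  have eq: "cc \<alpha> * (\<alpha> / (1 - \<alpha>)) = (1 - \<alpha>) + \<alpha>^3 / (1 - \<alpha>)^2"
    unfolding cc_def by simp
  have "\<alpha>^3 < \<alpha> * (1 - \<alpha>)^2"
    using assms mult_strict_mono[of \<alpha> "1 - \<alpha>" \<alpha> "1 - \<alpha>"]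
    by (simp add: power2_eq_square power3_eq_cube)
  then have "\<alpha>^3 / (1 - \<alpha>)^2 < \<alpha>"
    using assms by (simp add: divide_simps)
  with eq show ?thesis
    by simp
qed

lemma S_low_nonzero:
  assumes "0 < \<alpha>" "\<alpha> < 1/2" "0 < XB" "XB \<le> XA" "0 < \<sigma>" "\<sigma> < \<alpha> / (1 - \<alpha>)"
  shows "S \<alpha> XA XB \<sigma> \<noteq> 0"
proof -
  have "cc \<alpha> * \<sigma> < cc \<alpha> * (\<alpha> / (1 - \<alpha>))"
    using assms cc_pos[of \<alpha>] by (intro mult_strict_left_mono) auto
  also have "\<dots> < 1"
    using assms(1,2) by (rule cc_mult_threshold_less_one)
  also have "1 \<le> XA / XB"
    using assms by simp
  finally have "cc \<alpha> * \<sigma> < XA / XB" .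
  then show ?thesis
    using assms unfolding S_def Let_def by simp
qed

lemma regime_thresholds:
  fixes \<alpha> :: real
  assumes "0 < \<alpha>" "\<alpha> < 1/2"
  shows "\<alpha> / (1 - \<alpha>) < 1" "1 < (1 - \<alpha>) / \<alpha>"
  using assms by (auto simp: field_simps)

lemma S_high_zero_iff:
  assumes "0 < \<alpha>" "\<alpha> < 1/2" "(1 - \<alpha>) / \<alpha> \<le> \<sigma>"
  shows "S \<alpha> XA XB \<sigma> = 0 \<longleftrightarrow> \<sigma> = XA / XB * cc \<alpha>"
proof -
  have "\<not> \<sigma> < \<alpha> / (1 - \<alpha>)" "\<not> \<sigma> < (1 - \<alpha>) / \<alpha>"
    using assms(3) regime_thresholds[OF assms(1,2)] by linarith+
  then show ?thesis
    unfolding S_def Let_def by auto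
qed

lemma S_mid_eq:
  assumes "\<alpha> / (1 - \<alpha>) \<le> \<sigma>" "\<sigma> < (1 - \<alpha>) / \<alpha>"
  shows "S \<alpha> XA XB \<sigma> = \<alpha>^2 / (1 - \<alpha>) * (\<sigma>^3 - XA / XB) + \<alpha> * \<sigma> * (1 - XA / XB * \<sigma>)"
  using assms unfolding S_def Let_def by simp

lemma S_mid_zero_iff:
  assumes "0 < \<alpha>" "\<alpha> < 1" "\<alpha> / (1 - \<alpha>) \<le> \<sigma>" "\<sigma> < (1 - \<alpha>) / \<alpha>"
  shows "S \<alpha> XA XB \<sigma> = 0 \<longleftrightarrow>
           XA / XB * (\<alpha> + (1 - \<alpha>) * \<sigma>^2) = \<alpha> * \<sigma>^3 + (1 - \<alpha>) * \<sigma>"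
proof -
  have "\<alpha>^2 / u * (\<sigma>^3 - r) + \<alpha> * \<sigma> * (1 - r * \<sigma>)
          = \<alpha> / u * (\<alpha> * \<sigma>^3 + u * \<sigma> - r * (\<alpha> + u * \<sigma>^2))" if "u \<noteq> 0" for u r
    using that by (simp add: field_simps power2_eq_square power3_eq_cube)
  from this[of "1 - \<alpha>" "XA / XB"] assms
  have "S \<alpha> XA XB \<sigma> = \<alpha> / (1 - \<alpha>) *
          (\<alpha> * \<sigma>^3 + (1 - \<alpha>) * \<sigma> - XA / XB * (\<alpha> + (1 - \<alpha>) * \<sigma>^2))"
    using S_mid_eq[of \<alpha> \<sigma>] by simp
  then show ?thesis
    using assms by auto
qed

lemma piB_mid_ge:
  fixes \<alpha> r \<sigma> :: real
  defines "u \<equiv> 1 - \<alpha>"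
  assumes "0 < \<alpha>" "\<alpha> < 1/2" "1 \<le> r" "\<alpha> / u \<le> \<sigma>" "\<sigma> < u / \<alpha>"
    and zero: "r * (\<alpha> + u * \<sigma>^2) = \<alpha> * \<sigma>^3 + u * \<sigma>"
  shows "1 / (2 * r) \<le> piB \<alpha> \<sigma>"
proof -
  have u: "\<alpha> < u" "0 < u"
    using assms by auto
  have \<sigma>: "0 < \<sigma>" "\<alpha> * \<sigma> < u"
    using assms u by (auto simp: field_simps intro: less_le_trans[of 0 "\<alpha> / u"])
  have pos1: "0 < \<alpha> + u * \<sigma>^2" and pos2: "0 < \<alpha> * \<sigma>^2 + u"
    using u assms(2) by (simp_all add: add_pos_nonneg add_nonneg_pos)
  define N where "N = 2 * \<sigma> * u^2 - \<alpha> * u * \<sigma>^2 + \<alpha>^2"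
  define D where "D = 2 * \<sigma> * u * (\<alpha> * \<sigma>^2 + u)"
  have D_pos: "0 < D"
    unfolding D_def using u \<sigma> pos2 by simp
  have cubic: "0 \<le> \<alpha> * \<sigma>^3 - u * \<sigma>^2 + u * \<sigma> - \<alpha>"
  proof -
    have "\<alpha> * \<sigma>^3 - u * \<sigma>^2 + u * \<sigma> - \<alpha> = (r - 1) * (\<alpha> + u * \<sigma>^2)"
      using zero by (simp add: algebra_simps)
    then show ?thesis
      using assms(4) pos1 by simp
  qed
  have "N * (\<alpha> * \<sigma>^2 + u) - u * (\<alpha> + u * \<sigma>^2)
        = (u - \<alpha> * \<sigma>) * (u * (\<alpha> * \<sigma>^3 - u * \<sigma>^2 + u * \<sigma> - \<alpha>) + \<sigma> * (u^2 - \<alpha>^2))"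
    unfolding N_def u_def by (simp add: algebra_simps power2_eq_square power3_eq_cube)
  also have "\<dots> \<ge> 0"
    using u \<sigma> cubic assms(2)
    by (intro mult_nonneg_nonneg add_nonneg_nonneg) (auto intro: power_mono)
  finally have key: "u * (\<alpha> + u * \<sigma>^2) \<le> N * (\<alpha> * \<sigma>^2 + u)"
    by simp
  have "0 < \<alpha> * \<sigma>^3 + u * \<sigma>"
    using zero pos1 assms(4) by (metis mult_pos_pos less_le_trans zero_less_one)
  then have "1 / (2 * r) = (\<alpha> + u * \<sigma>^2) / (2 * (\<alpha> * \<sigma>^3 + u * \<sigma>))"
    using zero pos1 assms(4) by (simp add: field_simps)
  also have "\<dots> = u * (\<alpha> + u * \<sigma>^2) / (u * (2 * (\<alpha> * \<sigma>^3 + u * \<sigma>)))"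
    using u by simp
  also have "\<dots> = u * (\<alpha> + u * \<sigma>^2) / D"
    unfolding D_def by (simp add: algebra_simps power2_eq_square power3_eq_cube)
  also have "\<dots> \<le> N * (\<alpha> * \<sigma>^2 + u) / D"
    using key D_pos by (rule divide_right_mono[OF _ less_imp_le])
  also have "\<dots> = N / (2 * \<sigma> * u)"
    unfolding D_def using pos2 by simp
  also have "\<dots> = piB \<alpha> \<sigma>"
    using assms u \<sigma> unfolding piB_def N_def by (simp add: field_simps power2_eq_square)
  finally show ?thesis .
qed

lemma piB_ge_of_S_zero:
  assumes "0 < \<alpha>" "\<alpha> < 1/2" "0 < XB" "XB \<le> XA" "0 < \<sigma>" "S \<alpha> XA XB \<sigma> = 0"
  shows "XB / (2 * XA) \<le> piB \<alpha> \<sigma>"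
proof -
  have r: "1 \<le> XA / XB" and half_r: "XB / (2 * XA) = 1 / (2 * (XA / XB))"
    using assms by simp_all
  consider "\<sigma> < \<alpha> / (1 - \<alpha>)" | "\<alpha> / (1 - \<alpha>) \<le> \<sigma>" "\<sigma> < (1 - \<alpha>) / \<alpha>"
    | "(1 - \<alpha>) / \<alpha> \<le> \<sigma>"
    by linarith
  then show ?thesis
  proof cases
    case 1
    with S_low_nonzero[OF assms(1-5)] assms(6) show ?thesis
      by simp
  next
    case 2
    then have "XA / XB * (\<alpha> + (1 - \<alpha>) * \<sigma>^2) = \<alpha> * \<sigma>^3 + (1 - \<alpha>) * \<sigma>"
      using S_mid_zero_iff[of \<alpha> \<sigma> XA XB] assms(1,2,6) by simp
    from piB_mid_ge[OF assms(1,2) r 2 this] show ?thesis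
      unfolding half_r .
  next
    case 3
    then have "\<sigma> = XA / XB * cc \<alpha>"
      using S_high_zero_iff[OF assms(1,2) 3] assms(6) by simp
    moreover have "\<not> \<sigma> < \<alpha> / (1 - \<alpha>)" "\<not> \<sigma> < (1 - \<alpha>) / \<alpha>"
      using 3 regime_thresholds[OF assms(1,2)] by linarith+
    ultimately have "piB \<alpha> \<sigma> = 1 / (2 * (XA / XB))"
      using assms(1,2) cc_pos[of \<alpha>] unfolding piB_def by simp
    then show ?thesis
      unfolding half_r by simp
  qed
qed

text \<open>In the middle regime \<open>S\<close> is a positive multiple of this cubic.\<close>

definition S_mid_poly :: "real \<Rightarrow> real \<Rightarrow> real poly" where
  "S_mid_poly \<alpha> r = [:- r * \<alpha>, 1 - \<alpha>, - r * (1 - \<alpha>), \<alpha>:]"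

lemma poly_S_mid_poly:
  "poly (S_mid_poly \<alpha> r) \<sigma> = \<alpha> * \<sigma>^3 + (1 - \<alpha>) * \<sigma> - r * (\<alpha> + (1 - \<alpha>) * \<sigma>^2)"
  unfolding S_mid_poly_def by (simp add: algebra_simps power2_eq_square power3_eq_cube)

lemma S_has_positive_zero:
  assumes "0 < \<alpha>" "\<alpha> < 1/2" "0 < XB" "XB \<le> XA"
  shows "\<exists>\<sigma>>0. S \<alpha> XA XB \<sigma> = 0"
proof (cases "(1 - \<alpha>) / \<alpha> \<le> XA / XB * cc \<alpha>")
  case True
  moreover have "0 < XA / XB * cc \<alpha>"
    using assms cc_pos[of \<alpha>] by simp
  ultimately show ?thesis
    using S_high_zero_iff[OF assms(1,2)] by blast
next
  case False
  define r where "r = XA / XB"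
  define u where "u = 1 - \<alpha>"
  define k1 where "k1 = \<alpha> / u"
  define k2 where "k2 = u / \<alpha>"
  define h where "h = poly (S_mid_poly \<alpha> r)"
  have r: "1 \<le> r" and u: "0 < u" "\<alpha> + u = 1"
    using assms by (simp_all add: r_def u_def)
  have k1: "0 < k1" "k1 < 1" and k2: "1 < k2"
    using regime_thresholds[OF assms(1,2)] assms by (simp_all add: k1_def k2_def u_def)
  have hk: "h k = \<alpha> * k^3 + u * k - r * (\<alpha> + u * k^2)" for k
    unfolding h_def poly_S_mid_poly u_def ..
  have "h k1 = \<alpha> * (k1^3 - k1 + (1 - r) * (1 + k1))"
    unfolding hk k1_def using u(1) assms(1) by (simp add: field_simps power2_eq_square power3_eq_cube)
  moreover have "k1^3 < k1"
    using power_strict_decreasing[of 1 3 k1] k1 by simp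
  moreover have "(1 - r) * (1 + k1) \<le> 0"
    using r k1 by (intro mult_nonpos_nonneg) auto
  ultimately have "h k1 < 0"
    using assms by (simp add: mult_pos_neg)
  have "h k2 = k2 * (k2 * (u + \<alpha>) - r * (u^2 / \<alpha> + \<alpha>^2 / u))"
    unfolding hk k2_def using u(1) assms(1) by (simp add: field_simps power2_eq_square power3_eq_cube)
  also have "\<dots> = k2 * (k2 - r * cc \<alpha>)"
    unfolding cc_def u_def by simp
  also have "\<dots> > 0"
  proof -
    have "r * cc \<alpha> < k2"
      using False by (simp add: r_def k2_def u_def)
    then show ?thesis
      using k2 by simp
  qed
  finally have "0 < h k2" .
  obtain \<sigma> where \<sigma>: "k1 \<le> \<sigma>" "\<sigma> \<le> k2" "h \<sigma> = 0"
    using IVT[of h k1 0 k2] \<open>h k1 < 0\<close> \<open>0 < h k2\<close> k1 k2 unfolding h_def by auto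
  with \<open>0 < h k2\<close> have "\<sigma> < k2"
    by (cases "\<sigma> = k2") auto
  with \<sigma> have "S \<alpha> XA XB \<sigma> = 0"
    using S_mid_zero_iff[of \<alpha> \<sigma> XA XB] assms(1,2)
    unfolding hk k1_def k2_def r_def u_def by simp
  moreover have "0 < \<sigma>"
    using \<sigma> k1 by simp
  ultimately show ?thesis
    by blast
qed

lemma finite_positive_zeros_S:
  assumes "0 < \<alpha>" "\<alpha> < 1/2" "0 < XB" "XB \<le> XA"
  shows "finite {\<sigma>. 0 < \<sigma> \<and> S \<alpha> XA XB \<sigma> = 0}"
proof -
  let ?P = "S_mid_poly \<alpha> (XA / XB)"
  have "coeff ?P 3 \<noteq> 0"
    using assms by (simp add: S_mid_poly_def numeral_3_eq_3)
  then have "finite {\<sigma>. poly ?P \<sigma> = 0}"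
    by (intro poly_roots_finite) auto
  moreover have "{\<sigma>. 0 < \<sigma> \<and> S \<alpha> XA XB \<sigma> = 0} \<subseteq> insert (XA / XB * cc \<alpha>) {\<sigma>. poly ?P \<sigma> = 0}"
  proof
    fix \<sigma> assume "\<sigma> \<in> {\<sigma>. 0 < \<sigma> \<and> S \<alpha> XA XB \<sigma> = 0}"
    then have \<sigma>: "0 < \<sigma>" "S \<alpha> XA XB \<sigma> = 0"
      by simp_all
    then have low: "\<alpha> / (1 - \<alpha>) \<le> \<sigma>"
      using S_low_nonzero[OF assms] by force
    show "\<sigma> \<in> insert (XA / XB * cc \<alpha>) {\<sigma>. poly ?P \<sigma> = 0}"
    proof (cases "\<sigma> < (1 - \<alpha>) / \<alpha>")
      case True
      then show ?thesis
        using S_mid_zero_iff[of \<alpha> \<sigma> XA XB] low \<sigma> assms(1,2) by (simp add: poly_S_mid_poly)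
    next
      case False
      then show ?thesis
        using S_high_zero_iff[OF assms(1,2), of \<sigma> XA XB] \<sigma> by simp
    qed
  qed
  ultimately show ?thesis
    by (meson finite_insert finite_subset)
qed

theorem lemma3:
  fixes \<alpha> XA XB p :: real
  assumes "0 < \<alpha>" "\<alpha> < 1/2"
    and "0 < XB" "XB \<le> XA"
    and "0 \<le> p" "p \<le> XB"
  shows "\<exists>\<sigma>0. \<sigma>0 > 0 \<and> S \<alpha> XA XB \<sigma>0 = 0
           \<and> (\<forall>\<sigma>. \<sigma> > 0 \<and> S \<alpha> XA XB \<sigma> = 0 \<longrightarrow> piB \<alpha> \<sigma>0 \<le> piB \<alpha> \<sigma>)
           \<and> uB \<alpha> XA XB 2 p < piB \<alpha> \<sigma>0"
proof -
  let ?Z = "{\<sigma>. 0 < \<sigma> \<and> S \<alpha> XA XB \<sigma> = 0}"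
  have "?Z \<noteq> {}"
    using S_has_positive_zero[OF assms(1-4)] by blast
  then obtain \<sigma>0 where "is_arg_min (piB \<alpha>) (\<lambda>\<sigma>. \<sigma> \<in> ?Z) \<sigma>0"
    using ex_is_arg_min_if_finite finite_positive_zeros_S[OF assms(1-4)] by blast
  then have \<sigma>0: "0 < \<sigma>0" "S \<alpha> XA XB \<sigma>0 = 0"
    and min: "\<forall>\<sigma>. 0 < \<sigma> \<and> S \<alpha> XA XB \<sigma> = 0 \<longrightarrow> piB \<alpha> \<sigma>0 \<le> piB \<alpha> \<sigma>"
    unfolding is_arg_min_linorder by auto
  have "uB \<alpha> XA XB 2 p < XB / (2 * XA)"
    using uB_battlefield2_less assms by blast
  also have "\<dots> \<le> piB \<alpha> \<sigma>0"
    using piB_ge_of_S_zero[OF assms(1-4) \<sigma>0] .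
  finally show ?thesis
    using \<sigma>0 min by blast
qed

end
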